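(* Let $\xi>0$ be such that $D_\xi=D^TD-\xi^2I$ is nonsingular. Then for every $\omega\ge0$, the matrix $G(j\omega)$ has a singular value equal to $\xi$ if and only if $\lambda=j\omega$ solves $\det H_\xi(\lambda)=0$, where $H_\xi(\lambda)=\lambda I-M_0-\sum_{i=1}^m\left(M_ie^{-\lambda\tau_i}+M_{-i}e^{\lambda\tau_i}\right)$.
   Context: Let $n,m,n_u,n_y$ be positive integers, $A_0,\dots,A_m\in\mathbb{R}^{n\times n}$, $B\in\mathbb{R}^{n\times n_u}$, $C\in\mathbb{R}^{n_y\times n}$, $D\in\mathbb{R}^{n_y\times n_u}$, delays $\tau_1,\dots,\tau_m\ge0$. The transfer function is $G(s)=C\left(sI-A_0-\sum_{i=1}^mA_ie^{-\tau_is}\right)^{-1}B+D$. Standing assumption: the system is stable, i.e. all solutions $s$ of $\det\left(sI-A_0-\sum_{i=1}^mA_ie^{-\tau_is}\right)=0$ have negative real part. For $\xi>0$ put $D_\xi=D^TD-\xi^2I_{n_u}$, $\tilde D_\xi=DD^T-\xi^2I_{n_y}$, and define $2n\times2n$ matrices $M_0=\begin{bmatrix} A_0-BD_\xi^{-1}D^TC & -BD_\xi^{-1}B^T\\ \xi^2 C^T\tilde D_\xi^{-1}C & -A_0^T+C^TDD_\xi^{-1}B^T\end{bmatrix}$, $M_i=\begin{bmatrix}A_i&0\\0&0\end{bmatrix}$, $M_{-i}=\begin{bmatrix}0&0\\0&-A_i^T\end{bmatrix}$, $1\le i\le m$. *)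

theory Defs
  imports "HOL-Analysis.Analysis"
begin

definition cmat :: "real^'c^'r \<Rightarrow> complex^'c^'r" where
  "cmat A = (\<chi> i j. complex_of_real (A $ i $ j))"

definition adjoint_mat :: "complex^'c^'r \<Rightarrow> complex^'r^'c" where
  "adjoint_mat G = (\<chi> i j. cnj (G $ j $ i))"

definition smat :: "complex \<Rightarrow> complex^'c^'r \<Rightarrow> complex^'c^'r" where
  "smat c M = (\<chi> i j. c * M $ i $ j)"

definition is_eigenvalue :: "complex^'n^'n \<Rightarrow> complex \<Rightarrow> bool" where
  "is_eigenvalue M c \<longleftrightarrow> (\<exists>v. v \<noteq> 0 \<and> M *v v = c *s v)"

definition is_singular_value :: "complex^'c^'r \<Rightarrow> real \<Rightarrow> bool" where
  "is_singular_value G \<sigma> \<longleftrightarrow> \<sigma> \<ge> 0 \<and> is_eigenvalue (adjoint_mat G ** G) (complex_of_real (\<sigma>\<^sup>2))"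

definition char_mat :: "nat \<Rightarrow> (nat \<Rightarrow> real^'n^'n) \<Rightarrow> (nat \<Rightarrow> real) \<Rightarrow> complex \<Rightarrow> complex^'n^'n" where
  "char_mat m A \<tau> s = mat s - cmat (A 0)
     - (\<Sum>i\<in>{1..m}. smat (exp (- complex_of_real (\<tau> i) * s)) (cmat (A i)))"

definition transfer :: "nat \<Rightarrow> (nat \<Rightarrow> real^'n^'n) \<Rightarrow> (nat \<Rightarrow> real) \<Rightarrow> real^'u^'n \<Rightarrow> real^'n^'y
    \<Rightarrow> real^'u^'y \<Rightarrow> complex \<Rightarrow> complex^'u^'y" where
  "transfer m A \<tau> B C D s = cmat C ** matrix_inv (char_mat m A \<tau> s) ** cmat B + cmat D"

definition block2 :: "real^'n^'n \<Rightarrow> real^'n^'n \<Rightarrow> real^'n^'n \<Rightarrow> real^'n^'n \<Rightarrow> real^('n+'n)^('n+'n)" where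
  "block2 P Q R S = (\<chi> i j. case (i, j) of
       (Inl a, Inl b) \<Rightarrow> P $ a $ b | (Inl a, Inr b) \<Rightarrow> Q $ a $ b
     | (Inr a, Inl b) \<Rightarrow> R $ a $ b | (Inr a, Inr b) \<Rightarrow> S $ a $ b)"

definition D_xi :: "real^'u^'y \<Rightarrow> real \<Rightarrow> real^'u^'u" where
  "D_xi D \<xi> = transpose D ** D - (\<xi>\<^sup>2) *\<^sub>R mat 1"

definition Dt_xi :: "real^'u^'y \<Rightarrow> real \<Rightarrow> real^'y^'y" where
  "Dt_xi D \<xi> = D ** transpose D - (\<xi>\<^sup>2) *\<^sub>R mat 1"

definition M0 :: "real^'n^'n \<Rightarrow> real^'u^'n \<Rightarrow> real^'n^'y \<Rightarrow> real^'u^'y \<Rightarrow> real \<Rightarrow> real^('n+'n)^('n+'n)" where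
  "M0 A0 B C D \<xi> = block2
     (A0 - B ** matrix_inv (D_xi D \<xi>) ** transpose D ** C)
     (- (B ** matrix_inv (D_xi D \<xi>) ** transpose B))
     ((\<xi>\<^sup>2) *\<^sub>R (transpose C ** matrix_inv (Dt_xi D \<xi>) ** C))
     (- transpose A0 + transpose C ** D ** matrix_inv (D_xi D \<xi>) ** transpose B)"

definition Mplus :: "real^'n^'n \<Rightarrow> real^('n+'n)^('n+'n)" where
  "Mplus Ai = block2 Ai 0 0 0"

definition Mminus :: "real^'n^'n \<Rightarrow> real^('n+'n)^('n+'n)" where
  "Mminus Ai = block2 0 0 0 (- transpose Ai)"

definition H_xi :: "nat \<Rightarrow> (nat \<Rightarrow> real^'n^'n) \<Rightarrow> (nat \<Rightarrow> real) \<Rightarrow> real^'u^'n \<Rightarrow> real^'n^'y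
    \<Rightarrow> real^'u^'y \<Rightarrow> real \<Rightarrow> complex \<Rightarrow> complex^('n+'n)^('n+'n)" where
  "H_xi m A \<tau> B C D \<xi> z = mat z - cmat (M0 (A 0) B C D \<xi>)
     - (\<Sum>i\<in>{1..m}. smat (exp (- z * complex_of_real (\<tau> i))) (cmat (Mplus (A i)))
                    + smat (exp (z * complex_of_real (\<tau> i))) (cmat (Mminus (A i))))"

end

theory Submission
  imports Defs
begin

text \<open>
  Put \<open>s = j\<omega>\<close> and \<open>K = sI - A0 - \<Sum> A_i e^(-\<tau>_i s)\<close>, so that \<open>G = C K^-1 B + D\<close>; stability
  makes \<open>K\<close> invertible, and this is all that is used of the stability hypothesis. As \<open>s\<close> is imaginary, \<open>G^* = B^T K^-* C^T + D^T\<close>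
  and the lower right block of \<open>H_\<xi>(s)\<close> is \<open>-K^* - C^T D D_\<xi>^-1 B^T\<close>. If \<open>G^* G v = \<xi>^2 v\<close>, the
  state \<open>x = K^-1 B v\<close> and the costate \<open>p = K^-* C^T G v\<close> satisfy
  \<open>v = -D_\<xi>^-1 (D^T C x + B^T p)\<close>, and substituting this back puts \<open>(x, p) \<noteq> 0\<close> into the kernel
  of \<open>H_\<xi>(s)\<close>; conversely the same formula turns a kernel vector \<open>(x, p)\<close> into an eigenvector
  \<open>v\<close>. The push-through identity \<open>D D_\<xi>^-1 D^T - I = \<xi>^2 (D D^T - \<xi>^2 I)^-1\<close> brings the lower
  left block of \<open>M_0\<close> into the form \<open>C^T (I - D D_\<xi>^-1 D^T) C\<close> that this argument produces.
\<close>

lemma matrix_inv_right: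
  assumes "invertible (A :: 'a::semiring_1^'n^'m)"
  shows "A ** matrix_inv A = mat 1"
  using someI_ex[OF assms[unfolded invertible_def]] unfolding matrix_inv_def by auto

lemma matrix_inv_left:
  assumes "invertible (A :: 'a::semiring_1^'n^'m)"
  shows "matrix_inv A ** A = mat 1"
  using someI_ex[OF assms[unfolded invertible_def]] unfolding matrix_inv_def by auto

lemma matrix_inv_unique:
  fixes A :: "'a::field^'n^'n"
  assumes "A' ** A = mat 1"
  shows "matrix_inv A = A'"
  by (metis assms invertible_left_inverse matrix_inv_right matrix_mul_assoc matrix_mul_lid
      matrix_mul_rid)

lemma matrix_inv_mult_vec_eq_iff:
  assumes "invertible (A :: 'a::field^'n^'n)"
  shows "matrix_inv A *v y = x \<longleftrightarrow> A *v x = y"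
  by (metis assms matrix_inv_left matrix_inv_right matrix_vector_mul_assoc matrix_vector_mul_lid)

lemma det_eq_0_iff_ker_nontrivial:
  fixes A :: "'a::field^'n^'n"
  shows "det A = 0 \<longleftrightarrow> (\<exists>x. x \<noteq> 0 \<and> A *v x = 0)"
  using invertible_det_nz[of A] invertible_left_inverse[of A] matrix_left_invertible_ker[of A]
  by auto

lemma matrix_vector_mul_mat: "mat k *v x = k *s (x :: 'a::semiring_1^'n)"
  by (simp add: vec_eq_iff matrix_vector_mult_def mat_def if_distrib if_distribR
      cong del: if_weak_cong)

lemma matrix_vector_mult_uminus_right: "A *v (- x) = - (A *v (x :: 'a::ring_1^'n))"
  by (simp add: vec_eq_iff matrix_vector_mult_def sum_negf)

lemma matrix_vector_mult_uminus_left: "(- A) *v x = - (A *v (x :: 'a::ring_1^'n))"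
  by (simp add: vec_eq_iff matrix_vector_mult_def sum_negf)

lemma matrix_mul_mat: "mat a ** mat b = (mat (a * b) :: 'a::semiring_1^'n^'n)"
  by (simp add: matrix_eq matrix_vector_mul_mat vector_smult_assoc flip: matrix_vector_mul_assoc)

lemma matrix_diff_ldistrib: "A ** (B - C) = A ** B - A ** (C :: 'a::ring_1^'n^'m)"
  by (simp add: matrix_matrix_mult_def vec_eq_iff sum_subtractf right_diff_distrib)

lemma matrix_diff_rdistrib: "(A - B) ** C = A ** C - B ** (C :: 'a::ring_1^'n^'m)"
  by (simp add: matrix_matrix_mult_def vec_eq_iff sum_subtractf left_diff_distrib)

lemma mat_uminus: "mat (- z) = - (mat z :: 'a::ring_1^'n^'n)"
  by (simp add: mat_def vec_eq_iff)

lemma mat_matrix_mul_eq_scaleR: "mat c ** A = c *\<^sub>R (A :: real^'m^'n)"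
proof -
  have "mat c = c *\<^sub>R (mat 1 :: real^'n^'n)"
    by (simp add: mat_def vec_eq_iff)
  then show ?thesis
    by (simp flip: scalar_matrix_assoc)
qed

text \<open>Since \<open>D (E D - k) = (D E - k) D\<close>, the matrix \<open>D (E D - k)\<^sup>-\<^sup>1 E - 1\<close> is \<open>k\<close> times
  an inverse of \<open>D E - k\<close>.\<close>

lemma push_through_sub_mat:
  fixes D :: "'a::field^'u^'y" and E :: "'a^'y^'u"
  assumes "invertible (E ** D - mat k)"
  shows "(D ** E - mat k) ** (D ** matrix_inv (E ** D - mat k) ** E - mat 1) = mat k"
proof (rule matrix_eq[THEN iffD2], rule allI)
  fix x
  define Di where "Di = matrix_inv (E ** D - mat k)"
  have inv: "E *v (D *v (Di *v y)) = y + k *s (Di *v y)" for y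
  proof -
    have "(E ** D - mat k) *v (Di *v y) = y"
      by (simp add: Di_def matrix_vector_mul_assoc matrix_inv_right[OF assms])
    then show ?thesis
      by (simp add: algebra_simps matrix_vector_mul_mat flip: matrix_vector_mul_assoc)
  qed
  show "((D ** E - mat k) ** (D ** Di ** E - mat 1)) *v x = mat k *v x"
    by (simp add: algebra_simps matrix_vector_mul_mat inv vector_scalar_commute
        flip: matrix_vector_mul_assoc)
qed

lemma matrix_inv_push_through:
  fixes D :: "'a::field^'u^'y" and E :: "'a^'y^'u"
  assumes "invertible (E ** D - mat k)" and "k \<noteq> 0"
  shows "mat k ** matrix_inv (D ** E - mat k) = D ** matrix_inv (E ** D - mat k) ** E - mat 1"
proof -
  let ?X = "D ** matrix_inv (E ** D - mat k) ** E - mat 1"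
  have "((D ** E - mat k) ** (mat (inverse k) ** ?X)) *v y = y" for y
  proof -
    have "((D ** E - mat k) ** (mat (inverse k) ** ?X)) *v y
        = inverse k *s (((D ** E - mat k) ** ?X) *v y)"
      by (simp add: matrix_vector_mul_mat vector_scalar_commute flip: matrix_vector_mul_assoc)
    also have "\<dots> = y"
      using assms(2)
      by (simp add: push_through_sub_mat[OF assms(1)] matrix_vector_mul_mat vector_smult_assoc)
    finally show ?thesis .
  qed
  then have "(D ** E - mat k) ** (mat (inverse k) ** ?X) = mat 1"
    by (simp add: matrix_eq)
  then have left: "(mat (inverse k) ** ?X) ** (D ** E - mat k) = mat 1"
    by (simp only: matrix_left_right_inverse)
  have "mat k ** matrix_inv (D ** E - mat k) = (mat k ** mat (inverse k)) ** ?X"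
    unfolding matrix_inv_unique[OF left] by (rule matrix_mul_assoc)
  then show ?thesis
    using assms(2) by (simp add: matrix_mul_mat)
qed

definition block_mat ::
    "'a^'c^'r \<Rightarrow> 'a^'d^'r \<Rightarrow> 'a^'c^'s \<Rightarrow> 'a^'d^'s \<Rightarrow> 'a^('c+'d)^('r+'s)" where
  "block_mat P Q R S = (\<chi> i j. case (i, j) of
       (Inl a, Inl b) \<Rightarrow> P $ a $ b | (Inl a, Inr b) \<Rightarrow> Q $ a $ b
     | (Inr a, Inl b) \<Rightarrow> R $ a $ b | (Inr a, Inr b) \<Rightarrow> S $ a $ b)"

definition vec_pair :: "'a^'m \<Rightarrow> 'a^'n \<Rightarrow> 'a^('m+'n)" where
  "vec_pair x y = (\<chi> i. case i of Inl a \<Rightarrow> x $ a | Inr b \<Rightarrow> y $ b)"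

lemma vec_pair_eq_0_iff: "vec_pair x y = 0 \<longleftrightarrow> x = 0 \<and> y = 0"
  by (auto simp: vec_eq_iff vec_pair_def split: sum.split)

lemma vec_pair_surj: "\<exists>x y. z = vec_pair x y"
  by (rule exI[of _ "\<chi> a. z $ Inl a"], rule exI[of _ "\<chi> b. z $ Inr b"])
    (simp add: vec_eq_iff vec_pair_def split: sum.split)

lemma block_mat_mult_vec_pair:
  "block_mat P Q R S *v vec_pair x y = vec_pair (P *v x + Q *v y) (R *v x + S *v y)"
  by (simp add: vec_eq_iff block_mat_def vec_pair_def matrix_vector_mult_def
      sum.Plus flip: UNIV_Plus_UNIV split: sum.split)

lemma block2_eq_block_mat: "block2 = block_mat"
  by (simp add: fun_eq_iff block2_def block_mat_def)

lemma block_mat_eq_iff: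
  "block_mat P Q R S = block_mat P' Q' R' S' \<longleftrightarrow> P = P' \<and> Q = Q' \<and> R = R' \<and> S = S'"
  by (auto simp: block_mat_def vec_eq_iff split: sum.split)

lemma block_mat_add:
  "block_mat P Q R S + block_mat P' Q' R' S' = block_mat (P + P') (Q + Q') (R + R') (S + S')"
  by (simp add: block_mat_def vec_eq_iff split: sum.split)

lemma block_mat_diff:
  "block_mat P Q R S - block_mat P' Q' R' S' = block_mat (P - P') (Q - Q') (R - R') (S - S')"
  by (simp add: block_mat_def vec_eq_iff split: sum.split)

lemma block_mat_0: "block_mat 0 0 0 0 = 0"
  by (simp add: block_mat_def vec_eq_iff split: sum.split)

lemma block_mat_sum:
  "(\<Sum>i\<in>I. block_mat (P i) (Q i) (R i) (S i)) =
    block_mat (\<Sum>i\<in>I. P i) (\<Sum>i\<in>I. Q i) (\<Sum>i\<in>I. R i) (\<Sum>i\<in>I. S i)"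
  by (induction I rule: infinite_finite_induct) (simp_all add: block_mat_0 block_mat_add)

lemma mat_eq_block_mat: "mat z = block_mat (mat z) 0 0 (mat z)"
  by (simp add: block_mat_def mat_def vec_eq_iff split: sum.split)

lemma product_eigenvalue_iff_det_block_mat_eq_0:
  fixes K :: "'a::field^'m^'m" and L :: "'a^'n^'n"
    and B :: "'a^'u^'m" and C :: "'a^'m^'y" and D :: "'a^'u^'y"
    and B' :: "'a^'n^'u" and C' :: "'a^'y^'n" and D' :: "'a^'y^'u"
  assumes K: "invertible K" and L: "invertible L" and Dk: "invertible (D' ** D - mat k)"
  defines "Di \<equiv> matrix_inv (D' ** D - mat k)"
  shows "(\<exists>v. v \<noteq> 0 \<and>
            ((B' ** matrix_inv L ** C' + D') ** (C ** matrix_inv K ** B + D)) *v v = k *s v)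
    \<longleftrightarrow> det (block_mat (K + B ** Di ** D' ** C) (B ** Di ** B')
                     (C' ** (mat 1 - D ** Di ** D') ** C) (- L - C' ** D ** Di ** B')) = 0"
    (is "(\<exists>v. _ \<and> ?G *v v = _) \<longleftrightarrow> det ?H = 0")
proof -
  \<comment> \<open>the input \<open>v\<close> recovered from the state \<open>x\<close> and the costate \<open>p\<close>\<close>
  define w where "w x p = Di *v - (D' *v (C *v x) + B' *v p)" for x p
  have H_mult: "?H *v vec_pair x p =
      vec_pair (K *v x - B *v w x p) (C' *v (C *v x + D *v w x p) - L *v p)" for x p
    by (simp add: block_mat_mult_vec_pair w_def algebra_simps
        matrix_vector_mul_assoc[symmetric] matrix_vector_mult_uminus_right matrix_vector_mult_uminus_left)
  have rows: "?H *v vec_pair x p = 0 \<longleftrightarrow>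
      K *v x = B *v w x p \<and> L *v p = C' *v (C *v x + D *v w x p)" for x p
    by (auto simp: H_mult vec_pair_eq_0_iff)
  have eigen: "?G *v v = k *s v \<longleftrightarrow> v = w x p"
    if x: "K *v x = B *v v" and p: "L *v p = C' *v (C *v x + D *v v)" for v x p
  proof -
    have "matrix_inv K *v (B *v v) = x" "matrix_inv L *v (C' *v (C *v x + D *v v)) = p"
      using x p by (simp_all add: matrix_inv_mult_vec_eq_iff[OF K] matrix_inv_mult_vec_eq_iff[OF L])
    then have "?G *v v = B' *v p + D' *v (C *v x + D *v v)"
      by (simp add: matrix_vector_mult_add_rdistrib flip: matrix_vector_mul_assoc)
    then have diff: "?G *v v - k *s v = (D' ** D - mat k) *v v + (D' *v (C *v x) + B' *v p)"
      by (simp add: algebra_simps matrix_vector_mul_mat flip: matrix_vector_mul_assoc)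
    have "?G *v v = k *s v \<longleftrightarrow> (D' ** D - mat k) *v v + (D' *v (C *v x) + B' *v p) = 0"
      by (simp only: eq_iff_diff_eq_0[of "?G *v v"] diff)
    also have "\<dots> \<longleftrightarrow> (D' ** D - mat k) *v v = - (D' *v (C *v x) + B' *v p)"
      by (rule eq_neg_iff_add_eq_0[symmetric])
    also have "\<dots> \<longleftrightarrow> v = w x p"
      by (simp only: w_def Di_def eq_commute[of v] matrix_inv_mult_vec_eq_iff[OF Dk])
    finally show ?thesis .
  qed
  show ?thesis
  proof
    assume "\<exists>v. v \<noteq> 0 \<and> ?G *v v = k *s v"
    then obtain v where "v \<noteq> 0" and ev: "?G *v v = k *s v" by blast
    obtain x where x: "K *v x = B *v v"
      using matrix_inv_mult_vec_eq_iff[OF K] by blast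
    obtain p where p: "L *v p = C' *v (C *v x + D *v v)"
      using matrix_inv_mult_vec_eq_iff[OF L] by blast
    have "v = w x p" using eigen[OF x p] ev by blast
    then have "?H *v vec_pair x p = 0" using rows x p by simp
    moreover have "vec_pair x p \<noteq> 0"
      using \<open>v \<noteq> 0\<close> \<open>v = w x p\<close> by (auto simp: vec_pair_eq_0_iff w_def)
    ultimately show "det ?H = 0" unfolding det_eq_0_iff_ker_nontrivial by blast
  next
    assume "det ?H = 0"
    then obtain x p where "vec_pair x p \<noteq> 0" and "?H *v vec_pair x p = 0"
      unfolding det_eq_0_iff_ker_nontrivial by (metis vec_pair_surj)
    then have x: "K *v x = B *v w x p" and p: "L *v p = C' *v (C *v x + D *v w x p)"
      using rows by blast+
    have "w x p \<noteq> 0"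
    proof
      assume "w x p = 0"
      then have "x = 0"
        using x matrix_inv_mult_vec_eq_iff[OF K, of 0 x] by simp
      moreover have "p = 0"
        using p \<open>w x p = 0\<close> \<open>x = 0\<close> matrix_inv_mult_vec_eq_iff[OF L, of 0 p] by simp
      ultimately show False using \<open>vec_pair x p \<noteq> 0\<close> by (simp add: vec_pair_eq_0_iff)
    qed
    then show "\<exists>v. v \<noteq> 0 \<and> ?G *v v = k *s v" using eigen[OF x p] by blast
  qed
qed

lemma cmat_mult: "cmat (X ** Y) = cmat X ** cmat Y"
  by (simp add: cmat_def matrix_matrix_mult_def vec_eq_iff)

lemma cmat_add: "cmat (X + Y) = cmat X + cmat Y"
  by (simp add: cmat_def vec_eq_iff)

lemma cmat_diff: "cmat (X - Y) = cmat X - cmat Y"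
  by (simp add: cmat_def vec_eq_iff)

lemma cmat_uminus: "cmat (- X) = - cmat X"
  by (simp add: cmat_def vec_eq_iff)

lemma cmat_0: "cmat 0 = 0"
  by (simp add: cmat_def vec_eq_iff)

lemma cmat_mat: "cmat (mat r) = mat (complex_of_real r)"
  by (simp add: cmat_def mat_def vec_eq_iff)

lemma cmat_block_mat: "cmat (block_mat P Q R S) = block_mat (cmat P) (cmat Q) (cmat R) (cmat S)"
  by (simp add: cmat_def block_mat_def vec_eq_iff split: sum.split)

lemma
  fixes X :: "real^'n^'n"
  assumes "invertible X"
  shows invertible_cmat: "invertible (cmat X)"
    and cmat_matrix_inv: "cmat (matrix_inv X) = matrix_inv (cmat X)"
proof -
  have left: "cmat (matrix_inv X) ** cmat X = mat 1"
    by (simp add: matrix_inv_left[OF assms] cmat_mat flip: cmat_mult)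
  then show "invertible (cmat X)"
    using invertible_left_inverse by blast
  show "cmat (matrix_inv X) = matrix_inv (cmat X)"
    using left by (rule matrix_inv_unique[symmetric])
qed

lemma adjoint_mat_cmat: "adjoint_mat (cmat X) = cmat (transpose X)"
  by (simp add: cmat_def adjoint_mat_def transpose_def vec_eq_iff)

lemma adjoint_mat_mult: "adjoint_mat (X ** Y) = adjoint_mat Y ** adjoint_mat X"
  by (simp add: adjoint_mat_def matrix_matrix_mult_def vec_eq_iff mult.commute)

lemma adjoint_mat_add: "adjoint_mat (X + Y) = adjoint_mat X + adjoint_mat Y"
  by (simp add: adjoint_mat_def vec_eq_iff)

lemma adjoint_mat_diff: "adjoint_mat (X - Y) = adjoint_mat X - adjoint_mat Y"
  by (simp add: adjoint_mat_def vec_eq_iff)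

lemma adjoint_mat_sum: "adjoint_mat (\<Sum>i\<in>I. X i) = (\<Sum>i\<in>I. adjoint_mat (X i))"
  by (simp add: adjoint_mat_def vec_eq_iff)

lemma adjoint_mat_mat: "adjoint_mat (mat z) = mat (cnj z)"
  by (simp add: adjoint_mat_def mat_def vec_eq_iff)

lemma adjoint_mat_smat: "adjoint_mat (smat c X) = smat (cnj c) (adjoint_mat X)"
  by (simp add: adjoint_mat_def smat_def vec_eq_iff)

lemma
  fixes X :: "complex^'n^'n"
  assumes "invertible X"
  shows invertible_adjoint_mat: "invertible (adjoint_mat X)"
    and adjoint_mat_matrix_inv: "adjoint_mat (matrix_inv X) = matrix_inv (adjoint_mat X)"
proof -
  have left: "adjoint_mat (matrix_inv X) ** adjoint_mat X = mat 1"
    by (simp add: matrix_inv_right[OF assms] adjoint_mat_mat flip: adjoint_mat_mult)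
  then show "invertible (adjoint_mat X)"
    using invertible_left_inverse by blast
  show "adjoint_mat (matrix_inv X) = matrix_inv (adjoint_mat X)"
    using left by (rule matrix_inv_unique[symmetric])
qed

lemma smat_block_mat:
  "smat c (block_mat P Q R S) = block_mat (smat c P) (smat c Q) (smat c R) (smat c S)"
  by (simp add: smat_def block_mat_def vec_eq_iff split: sum.split)

lemma smat_0: "smat c 0 = 0"
  by (simp add: smat_def vec_eq_iff)

lemma smat_uminus: "smat c (- X) = - smat c X"
  by (simp add: smat_def vec_eq_iff)

lemma D_xi_eq: "D_xi D \<xi> = transpose D ** D - mat (\<xi>\<^sup>2)"
  by (simp add: D_xi_def mat_def vec_eq_iff)

lemma Dt_xi_eq: "Dt_xi D \<xi> = D ** transpose D - mat (\<xi>\<^sup>2)"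
  by (simp add: Dt_xi_def mat_def vec_eq_iff)

lemma cmat_D_xi:
  "cmat (D_xi D \<xi>) = cmat (transpose D) ** cmat D - mat (complex_of_real (\<xi>\<^sup>2))"
  by (simp add: D_xi_eq cmat_diff cmat_mult cmat_mat)

lemma adjoint_mat_transfer:
  assumes "invertible (char_mat m A \<tau> s)"
  shows "adjoint_mat (transfer m A \<tau> B C D s) = cmat (transpose B)
    ** matrix_inv (adjoint_mat (char_mat m A \<tau> s)) ** cmat (transpose C) + cmat (transpose D)"
  by (simp add: transfer_def adjoint_mat_add adjoint_mat_mult adjoint_mat_cmat
      adjoint_mat_matrix_inv[OF assms] matrix_mul_assoc)

lemma M0_eq_block_mat:
  fixes D :: "real^'u::finite^'y::finite"
  assumes "invertible (D_xi D \<xi>)" and "\<xi> \<noteq> 0"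
  defines "Di \<equiv> matrix_inv (D_xi D \<xi>)"
  shows "M0 A0 B C D \<xi> = block_mat
     (A0 - B ** Di ** transpose D ** C) (- (B ** Di ** transpose B))
     (transpose C ** (D ** Di ** transpose D - mat 1) ** C)
     (- transpose A0 + transpose C ** D ** Di ** transpose B)"
proof -
  have Dt: "D ** Di ** transpose D - mat 1 = \<xi>\<^sup>2 *\<^sub>R matrix_inv (Dt_xi D \<xi>)"
    unfolding Di_def D_xi_eq Dt_xi_eq mat_matrix_mul_eq_scaleR[symmetric]
    by (rule matrix_inv_push_through[symmetric]) (use assms in \<open>simp_all add: D_xi_eq\<close>)
  show ?thesis
    unfolding Dt unfolding M0_def block2_eq_block_mat Di_def
    by (simp add: matrix_scalar_ac scalar_matrix_assoc)
qed

lemma H_xi_eq_block_mat: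
  fixes m :: nat and A :: "nat \<Rightarrow> real^'n::finite^'n" and \<tau> :: "nat \<Rightarrow> real"
    and D :: "real^'u::finite^'y::finite"
  assumes "cnj s = - s" and "invertible (D_xi D \<xi>)" and "\<xi> \<noteq> 0"
  defines "K \<equiv> char_mat m A \<tau> s" and "Di \<equiv> cmat (matrix_inv (D_xi D \<xi>))"
  shows "H_xi m A \<tau> B C D \<xi> s = block_mat
     (K + cmat B ** Di ** cmat (transpose D) ** cmat C)
     (cmat B ** Di ** cmat (transpose B))
     (cmat (transpose C) ** (mat 1 - cmat D ** Di ** cmat (transpose D)) ** cmat C)
     (- adjoint_mat K - cmat (transpose C) ** cmat D ** Di ** cmat (transpose B))"
proof -
  have "cnj (exp (- complex_of_real (\<tau> i) * s)) = exp (s * complex_of_real (\<tau> i))" for i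
    by (simp add: exp_cnj assms(1) mult.commute)
  then have adjoint_K: "adjoint_mat K = - mat s - cmat (transpose (A 0))
      - (\<Sum>i\<in>{1..m}. smat (exp (s * complex_of_real (\<tau> i))) (cmat (transpose (A i))))"
    by (simp add: K_def char_mat_def adjoint_mat_diff adjoint_mat_sum adjoint_mat_smat
        adjoint_mat_mat adjoint_mat_cmat assms(1) mat_uminus)
  show ?thesis
    unfolding H_xi_def M0_eq_block_mat[OF assms(2,3)] Mplus_def Mminus_def block2_eq_block_mat
      adjoint_K mat_eq_block_mat[of s]
    by (simp add: K_def Di_def char_mat_def cmat_block_mat smat_block_mat block_mat_add block_mat_diff
        block_mat_sum block_mat_eq_iff cmat_mult cmat_add cmat_diff cmat_uminus cmat_0 cmat_mat
        smat_0 smat_uminus sum_negf matrix_diff_ldistrib matrix_diff_rdistrib algebra_simps)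
qed

theorem theorem4:
  fixes m :: nat
    and A :: "nat \<Rightarrow> real^'n::finite^'n"
    and \<tau> :: "nat \<Rightarrow> real"
    and B :: "real^'u::finite^'n"
    and C :: "real^'n^'y::finite"
    and D :: "real^'u^'y"
    and \<xi> \<omega> :: real
  assumes "m \<ge> 1"
    and "\<forall>i\<in>{1..m}. \<tau> i \<ge> 0"
    and stable: "\<forall>s. det (char_mat m A \<tau> s) = 0 \<longrightarrow> Re s < 0"
    and "\<xi> > 0"
    and "invertible (D_xi D \<xi>)"
    and "\<omega> \<ge> 0"
  shows "is_singular_value (transfer m A \<tau> B C D (\<i> * complex_of_real \<omega>)) \<xi>
     \<longleftrightarrow> det (H_xi m A \<tau> B C D \<xi> (\<i> * complex_of_real \<omega>)) = 0"
proof -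
  define s where "s = \<i> * complex_of_real \<omega>"
  define K where "K = char_mat m A \<tau> s"
  have cnj_s: "cnj s = - s" and \<xi>: "\<xi> \<noteq> 0"
    using assms(4) by (simp_all add: s_def)
  have K: "invertible K"
    using stable by (auto simp: K_def s_def invertible_det_nz)
  note D = invertible_cmat[OF assms(5), unfolded cmat_D_xi]
  note Di = cmat_matrix_inv[OF assms(5), unfolded cmat_D_xi, symmetric]
  have "is_singular_value (transfer m A \<tau> B C D s) \<xi> \<longleftrightarrow>
      (\<exists>v. v \<noteq> 0 \<and> ((cmat (transpose B) ** matrix_inv (adjoint_mat K) ** cmat (transpose C)
         + cmat (transpose D)) ** (cmat C ** matrix_inv K ** cmat B + cmat D)) *v v
         = complex_of_real (\<xi>\<^sup>2) *s v)"
    using assms(4)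
    unfolding is_singular_value_def is_eigenvalue_def adjoint_mat_transfer[OF K[unfolded K_def]]
    by (simp add: transfer_def K_def)
  also have "\<dots> \<longleftrightarrow> det (H_xi m A \<tau> B C D \<xi> s) = 0"
    using product_eigenvalue_iff_det_block_mat_eq_0[OF K invertible_adjoint_mat[OF K] D]
    unfolding H_xi_eq_block_mat[OF cnj_s assms(5) \<xi>] Di K_def .
  finally show ?thesis
    unfolding s_def .
qed

end
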